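(* Let $k$ be an algebraically closed field of characteristic $0$, $d\ge3$, $n\ge1$, and let $V_n$ have basis $v_1,\dots,v_n$ with symmetric $d$-linear form $\Theta_d(v_{i_1},\dots,v_{i_d})=1$ if $i_1+\dots+i_d=(d-1)n+1$ and $0$ otherwise. Let $\mathcal{L}(n,d)=\{L\in\mathfrak{gl}(V_n):\sum_{i=1}^d\Theta_d(u_1,\dots,L(u_i),\dots,u_d)=0\ \forall u_j\}$. Then every element of $\mathcal{L}(n,d)$ is upper triangular with respect to the basis $v_1,\dots,v_n$ (i.e. maps $v_i$ into $\mathrm{span}\{v_1,\dots,v_i\}$); hence $\mathcal{L}(n,d)$ is solvable. *)

theory Defs
  imports "HOL-Computational_Algebra.Polynomial" "HOL-Library.FuncSet"
begin

text \<open>Vectors of V_n are coordinate functions nat => 'a (coordinates 1..n);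
 endomorphisms of V_n are matrices nat => nat => 'a with entries indexed by {1..n},
 where L v_j = sum_i L i j v_i.\<close>

type_synonym 'a mat = "nat \<Rightarrow> nat \<Rightarrow> 'a"

definition mat_apply :: "nat \<Rightarrow> 'a::field mat \<Rightarrow> (nat \<Rightarrow> 'a) \<Rightarrow> (nat \<Rightarrow> 'a)" where
  "mat_apply n L u = (\<lambda>i. \<Sum>l=1..n. L i l * u l)"

definition Theta :: "nat \<Rightarrow> nat \<Rightarrow> (nat \<Rightarrow> nat \<Rightarrow> 'a::field) \<Rightarrow> 'a" where
  "Theta n d u = (\<Sum>\<iota>\<in>PiE {0..<d} (\<lambda>_. {1..n}).
      if (\<Sum>j<d. \<iota> j) = (d - 1) * n + 1 then (\<Prod>j<d. u j (\<iota> j)) else 0)"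

definition Lnd :: "nat \<Rightarrow> nat \<Rightarrow> 'a::field mat set" where
  "Lnd n d = {L. (\<forall>i j. (i \<notin> {1..n} \<or> j \<notin> {1..n}) \<longrightarrow> L i j = 0) \<and>
      (\<forall>u :: nat \<Rightarrow> nat \<Rightarrow> 'a. (\<Sum>i<d. Theta n d (u(i := mat_apply n L (u i)))) = 0)}"

definition upper_triangular :: "nat \<Rightarrow> 'a::field mat \<Rightarrow> bool" where
  "upper_triangular n L \<longleftrightarrow> (\<forall>i j. 1 \<le> j \<and> j < i \<and> i \<le> n \<longrightarrow> L i j = 0)"

definition mat_mult :: "nat \<Rightarrow> 'a::field mat \<Rightarrow> 'a mat \<Rightarrow> 'a mat" where
  "mat_mult n A B = (\<lambda>i j. \<Sum>l=1..n. A i l * B l j)"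

definition bracket :: "nat \<Rightarrow> 'a::field mat \<Rightarrow> 'a mat \<Rightarrow> 'a mat" where
  "bracket n A B = (\<lambda>i j. mat_mult n A B i j - mat_mult n B A i j)"

inductive_set derived_step :: "nat \<Rightarrow> 'a::field mat set \<Rightarrow> 'a mat set" for n S where
  br: "A \<in> S \<Longrightarrow> B \<in> S \<Longrightarrow> bracket n A B \<in> derived_step n S"
| zero: "(\<lambda>i j. 0) \<in> derived_step n S"
| add: "X \<in> derived_step n S \<Longrightarrow> Y \<in> derived_step n S \<Longrightarrow> (\<lambda>i j. X i j + Y i j) \<in> derived_step n S"
| smult: "X \<in> derived_step n S \<Longrightarrow> (\<lambda>i j. c * X i j) \<in> derived_step n S"

definition derived_series :: "nat \<Rightarrow> 'a::field mat set \<Rightarrow> nat \<Rightarrow> 'a mat set" where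
  "derived_series n S m = (derived_step n ^^ m) S"

definition solvable_lie :: "nat \<Rightarrow> 'a::field mat set \<Rightarrow> bool" where
  "solvable_lie n S \<longleftrightarrow> (\<exists>m. derived_series n S m \<subseteq> {\<lambda>i j. 0})"

end

theory Submission
  imports Defs
begin

(* Feeding basis vectors v_(t 0), ..., v_(t (d-1)) into the defining identity of L(n,d) gives
   sum_k L (t k + e) (t k) = 0 with e = (d-1)n + 1 - sum_k t k. For a fixed e >= 1 put
   f x = L (x + e) x, which vanishes for x > m = n - e; the choice t = (a, b, c, n, ..., n)
   yields f a + f b + f c = 0 whenever a + b + c = n + m + 1. The triples (y, n, m+1-y) and
   (y+1, n-1, m+1-y) make f an arithmetic progression on [1, m+1] vanishing at m+1, and the
   triple (1, m, n) then forces its step to be 0 in characteristic 0. Solvability follows since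
   the k-th derived algebra of upper triangular matrices is supported on and above the k-th
   superdiagonal. *)

lemma triple_relation_arith_progression:
  fixes f :: "nat \<Rightarrow> 'a::comm_ring_1"
  assumes "m < n"
    and vanish: "\<And>x. m < x \<Longrightarrow> x \<le> n \<Longrightarrow> f x = 0"
    and triple: "\<And>a b c. a \<in> {1..n} \<Longrightarrow> b \<in> {1..n} \<Longrightarrow> c \<in> {1..n}
       \<Longrightarrow> a + b + c = n + m + 1 \<Longrightarrow> f a + f b + f c = 0"
    and "k \<le> m"
  shows "f (m + 1 - k) = of_nat k * f (n - 1)"
  using \<open>k \<le> m\<close>
proof (induction k)
  case 0
  then show ?case using vanish \<open>m < n\<close> by simp
next
  case (Suc k)
  define y where "y = m - k"
  have y: "1 \<le> y" "y \<le> m" "m + 1 - k = y + 1" "m + 1 - Suc k = y"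
    using Suc.prems unfolding y_def by auto
  have "f n = 0"
    using vanish \<open>m < n\<close> by simp
  then have "f y = - f (m + 1 - y)"
    using triple[of y n "m + 1 - y"] y \<open>m < n\<close> by (simp add: Suc_le_eq eq_neg_iff_add_eq_0)
  moreover have "f (y + 1) + f (n - 1) = - f (m + 1 - y)"
    using triple[of "y + 1" "n - 1" "m + 1 - y"] y \<open>m < n\<close>
    by (simp add: Suc_le_eq eq_neg_iff_add_eq_0 add.assoc)
  ultimately show ?case
    using Suc y by (simp add: algebra_simps)
qed

lemma triple_relation_vanishes:
  fixes f :: "nat \<Rightarrow> 'a::field_char_0"
  assumes "m < n"
    and vanish: "\<And>x. m < x \<Longrightarrow> x \<le> n \<Longrightarrow> f x = 0"
    and triple: "\<And>a b c. a \<in> {1..n} \<Longrightarrow> b \<in> {1..n} \<Longrightarrow> c \<in> {1..n}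
       \<Longrightarrow> a + b + c = n + m + 1 \<Longrightarrow> f a + f b + f c = 0"
    and "x \<in> {1..n}"
  shows "f x = 0"
proof (cases "m < x")
  case True
  then show ?thesis using vanish \<open>x \<in> {1..n}\<close> by simp
next
  case False
  have progression: "f (m + 1 - k) = of_nat k * f (n - 1)" if "k \<le> m" for k
    using \<open>m < n\<close> vanish triple that by (rule triple_relation_arith_progression)
  have "1 \<le> m" "m \<le> n"
    using False \<open>m < n\<close> \<open>x \<in> {1..n}\<close> by auto
  have "f 1 + f m + f n = 0"
    using triple[of 1 m n] \<open>1 \<le> m\<close> \<open>m \<le> n\<close> by simp
  moreover have "f 1 = of_nat m * f (n - 1)" and "f m = f (n - 1)" and "f n = 0"
    using progression[of m] progression[of 1] vanish \<open>1 \<le> m\<close> \<open>m < n\<close> by simp_all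
  ultimately have "of_nat (m + 1) * f (n - 1) = 0"
    by (simp add: algebra_simps)
  then have "f (n - 1) = 0"
    by (simp only: mult_eq_0_iff of_nat_eq_0_iff) simp
  then show ?thesis
    using progression[of "m + 1 - x"] False \<open>x \<in> {1..n}\<close> by auto
qed

definition basis_vec :: "nat \<Rightarrow> nat \<Rightarrow> 'a::field" where
  "basis_vec j = (\<lambda>i. if i = j then 1 else 0)"

lemma mat_apply_basis_vec:
  assumes "j \<in> {1..n}"
  shows "mat_apply n L (basis_vec j) = (\<lambda>i. L i j)"
  unfolding mat_apply_def basis_vec_def using assms by (auto simp: if_distrib cong: if_cong)

lemma sum_fun_upd_add:
  fixes t :: "'a \<Rightarrow> 'b::comm_monoid_add"
  assumes "finite A" and "i \<in> A"
  shows "sum (t(i := l)) A + t i = sum t A + l"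
proof -
  have "sum (t(i := l)) (A - {i}) = sum t (A - {i})"
    by (rule sum.cong) auto
  then have "sum (t(i := l)) A = l + sum t (A - {i})"
    using sum.remove[OF assms, of "t(i := l)"] by simp
  moreover have "sum t A = t i + sum t (A - {i})"
    using sum.remove[OF assms] .
  ultimately show ?thesis
    by (simp add: ac_simps)
qed

text \<open>Only the multi-indices agreeing with t outside slot k0 contribute to the sum defining Theta.\<close>

lemma Theta_basis_vec_update:
  fixes w :: "nat \<Rightarrow> 'a::field"
  assumes k0: "k0 < d" and t: "\<And>k. k < d \<Longrightarrow> t k \<in> {1..n}"
  shows "Theta n d ((\<lambda>k. basis_vec (t k))(k0 := w)) =
     (\<Sum>l=1..n. if (\<Sum>j<d. (t(k0 := l)) j) = (d - 1) * n + 1 then w l else 0)"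
proof -
  define u where "u = (\<lambda>k. basis_vec (t k))(k0 := w)"
  define h where "h = (\<lambda>\<iota>. if (\<Sum>j<d. \<iota> j) = (d - 1) * n + 1 then (\<Prod>j<d. u j (\<iota> j)) else (0::'a))"
  define g where "g = (\<lambda>l. restrict (t(k0 := l)) {0..<d})"
  define P where "P = PiE {0..<d} (\<lambda>_. {1..n::nat})"
  have "finite P" unfolding P_def by (simp add: finite_PiE)
  have "g ` {1..n} \<subseteq> P" unfolding g_def P_def using t by (auto simp: PiE_iff)
  have "inj_on g {1..n}"
  proof
    fix x y assume "g x = g y"
    then have "g x k0 = g y k0" by simp
    then show "x = y" using k0 unfolding g_def by simp
  qed
  have "h \<iota> = 0" if "\<iota> \<in> P - g ` {1..n}" for \<iota>
  proof -
    have "\<iota> \<in> P" and "\<iota> \<notin> g ` {1..n}" using that by auto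
    have "\<exists>j<d. j \<noteq> k0 \<and> \<iota> j \<noteq> t j"
    proof (rule ccontr)
      assume "\<not> ?thesis"
      then have "\<iota> j = g (\<iota> k0) j" for j
        using \<open>\<iota> \<in> P\<close> unfolding g_def P_def by (cases "j < d") (auto simp: PiE_iff extensional_def)
      then have "\<iota> = g (\<iota> k0)" ..
      moreover have "\<iota> k0 \<in> {1..n}" using \<open>\<iota> \<in> P\<close> k0 unfolding P_def by (auto simp: PiE_iff)
      ultimately show False using \<open>\<iota> \<notin> g ` {1..n}\<close> by blast
    qed
    then obtain j where "j < d" "j \<noteq> k0" "\<iota> j \<noteq> t j" by blast
    then have "(\<Prod>j<d. u j (\<iota> j)) = 0"
      by (intro prod_zero) (auto simp: u_def basis_vec_def)
    then show ?thesis unfolding h_def by simp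
  qed
  then have "Theta n d u = sum h (g ` {1..n})"
    unfolding Theta_def h_def[symmetric] P_def[symmetric]
    by (intro sum.mono_neutral_right[OF \<open>finite P\<close> \<open>g ` {1..n} \<subseteq> P\<close>]) blast
  also have "\<dots> = sum (h \<circ> g) {1..n}"
    using \<open>inj_on g {1..n}\<close> by (rule sum.reindex)
  also have "\<dots> = (\<Sum>l=1..n. if (\<Sum>j<d. (t(k0 := l)) j) = (d - 1) * n + 1 then w l else 0)"
  proof (rule sum.cong[OF refl])
    fix l
    have "(\<Sum>j<d. g l j) = (\<Sum>j<d. (t(k0 := l)) j)"
      unfolding g_def by (rule sum.cong) auto
    moreover have "(\<Prod>j<d. u j (g l j)) = (\<Prod>j<d. if j = k0 then w l else 1)"
      by (rule prod.cong) (auto simp: u_def g_def basis_vec_def)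
    ultimately show "(h \<circ> g) l = (if (\<Sum>j<d. (t(k0 := l)) j) = (d - 1) * n + 1 then w l else 0)"
      unfolding h_def using k0 by simp
  qed
  finally show ?thesis unfolding u_def .
qed

lemma Lnd_entries_outside:
  assumes "L \<in> Lnd n d" and "i \<notin> {1..n} \<or> j \<notin> {1..n}"
  shows "L i j = 0"
  using assms unfolding Lnd_def by blast

lemma Lnd_shifted_diagonal_sum:
  fixes L :: "'a::field mat"
  assumes L: "L \<in> Lnd n d" and t: "\<And>k. k < d \<Longrightarrow> t k \<in> {1..n}"
    and total: "(\<Sum>k<d. t k) + e = (d - 1) * n + 1"
  shows "(\<Sum>k<d. L (t k + e) (t k)) = 0"
proof -
  define u :: "nat \<Rightarrow> nat \<Rightarrow> 'a" where "u = (\<lambda>k. basis_vec (t k))"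
  have "Theta n d (u(i := mat_apply n L (u i))) = L (t i + e) (t i)" if "i < d" for i
  proof -
    have "(\<Sum>j<d. (t(i := l)) j) = (d - 1) * n + 1 \<longleftrightarrow> l = t i + e" for l
      using sum_fun_upd_add[of "{..<d}" i t l] \<open>i < d\<close> total by (simp del: fun_upd_apply) linarith
    then have "Theta n d (u(i := mat_apply n L (u i))) = (\<Sum>l=1..n. if l = t i + e then L l (t i) else 0)"
      unfolding u_def mat_apply_basis_vec[OF t[OF \<open>i < d\<close>]]
      by (simp add: Theta_basis_vec_update[OF \<open>i < d\<close> t])
    also have "\<dots> = L (t i + e) (t i)"
      using Lnd_entries_outside[OF L] by (simp add: sum.delta')
    finally show ?thesis .
  qed
  moreover have "(\<Sum>i<d. Theta n d (u(i := mat_apply n L (u i)))) = 0"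
    using L unfolding Lnd_def by blast
  ultimately show ?thesis
    by simp
qed

lemma Lnd_shifted_triple_relation:
  fixes L :: "'a::field mat"
  assumes L: "L \<in> Lnd n d" and "d \<ge> 3" and "e \<ge> 1"
    and abc: "a \<in> {1..n}" "b \<in> {1..n}" "c \<in> {1..n}" and "a + b + c + e = 2 * n + 1"
  shows "L (a + e) a + L (b + e) b + L (c + e) c = 0"
proof -
  define d' where "d' = d - 3"
  have d: "d = Suc (Suc (Suc d'))"
    using \<open>d \<ge> 3\<close> unfolding d'_def by simp
  define t where "t = (\<lambda>k::nat. if k = 0 then a else if k = 1 then b else if k = 2 then c else n)"
  have "t k \<in> {1..n}" for k
    using abc unfolding t_def by auto
  moreover have "(\<Sum>k<d. t k) + e = (d - 1) * n + 1"
    using \<open>a + b + c + e = 2 * n + 1\<close> unfolding d sum.lessThan_Suc_shift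
    by (simp add: t_def algebra_simps)
  ultimately have "(\<Sum>k<d. L (t k + e) (t k)) = 0"
    by (intro Lnd_shifted_diagonal_sum[OF L])
  moreover have "L (n + e) n = 0"
    using Lnd_entries_outside[OF L] \<open>e \<ge> 1\<close> by simp
  ultimately show ?thesis
    unfolding d sum.lessThan_Suc_shift by (simp add: t_def algebra_simps)
qed

lemma Lnd_upper_triangular:
  fixes L :: "'a::field_char_0 mat"
  assumes L: "L \<in> Lnd n d" and "d \<ge> 3"
  shows "upper_triangular n L"
  unfolding upper_triangular_def
proof (intro allI impI)
  fix i j :: nat
  assume ij: "1 \<le> j \<and> j < i \<and> i \<le> n"
  define e where "e = i - j"
  have e_bounds: "1 \<le> e" "e < n" "i = j + e"
    using ij unfolding e_def by auto
  have "L (j + e) j = 0"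
  proof (rule triple_relation_vanishes[where m = "n - e"])
    show "n - e < n" and "j \<in> {1..n}"
      using ij e_bounds by auto
    show "L (x + e) x = 0" if "n - e < x" "x \<le> n" for x
      using Lnd_entries_outside[OF L] that by simp
    show "L (a + e) a + L (b + e) b + L (c + e) c = 0"
      if "a \<in> {1..n}" "b \<in> {1..n}" "c \<in> {1..n}" "a + b + c = n + (n - e) + 1" for a b c
      using Lnd_shifted_triple_relation[OF L \<open>d \<ge> 3\<close> \<open>1 \<le> e\<close>] that e_bounds by simp
  qed
  then show "L i j = 0"
    using e_bounds by simp
qed

definition supported_above_diag :: "nat \<Rightarrow> nat \<Rightarrow> 'a::field mat \<Rightarrow> bool" where
  "supported_above_diag n k X \<longleftrightarrow>
     (\<forall>i j. (i \<notin> {1..n} \<or> j \<notin> {1..n}) \<longrightarrow> X i j = 0) \<and> (\<forall>i j. j < i + k \<longrightarrow> X i j = 0)"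

lemma bracket_supported_above_diag:
  assumes A: "supported_above_diag n k A" and B: "supported_above_diag n k B"
  shows "supported_above_diag n (Suc k) (bracket n A B)"
proof -
  have outside: "A i j = 0" "B i j = 0" if "i \<notin> {1..n} \<or> j \<notin> {1..n}" for i j
    using A B that unfolding supported_above_diag_def by blast+
  have below: "A i j = 0" "B i j = 0" if "j < i + k" for i j
    using A B that unfolding supported_above_diag_def by blast+
  have "bracket n A B i j = 0" if "i \<notin> {1..n} \<or> j \<notin> {1..n}" for i j
  proof -
    have "mat_mult n A B i j = 0" and "mat_mult n B A i j = 0"
      unfolding mat_mult_def by (rule sum.neutral, use that outside in auto)+
    then show ?thesis
      unfolding bracket_def by simp
  qed
  moreover have "bracket n A B i j = 0" if "j < i + Suc k" for i j
  proof -
    have "A i l * B l j = B i l * A l j" for l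
    proof (cases "l < i + k \<or> j < l + k")
      case True
      then show ?thesis using below by auto
    next
      case False
      then have "i + k \<le> l" and "l + k \<le> j"
        by simp_all
      with \<open>j < i + Suc k\<close> have "l = i" and "j = i"
        by linarith+
      then show ?thesis by simp
    qed
    then show ?thesis
      unfolding bracket_def mat_mult_def by simp
  qed
  ultimately show ?thesis
    unfolding supported_above_diag_def by blast
qed

lemma derived_step_supported_above_diag:
  assumes "\<And>X. X \<in> S \<Longrightarrow> supported_above_diag n k X" and "Y \<in> derived_step n S"
  shows "supported_above_diag n (Suc k) Y"
  using assms(2)
proof induction
  case (br A B)
  then show ?case using bracket_supported_above_diag assms(1) by blast
qed (auto simp: supported_above_diag_def)

lemma derived_series_supported_above_diag:
  assumes "\<And>X. X \<in> S \<Longrightarrow> supported_above_diag n 0 X" and "X \<in> derived_series n S m"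
  shows "supported_above_diag n m X"
  using assms(2)
proof (induction m arbitrary: X)
  case 0
  then show ?case using assms(1) unfolding derived_series_def by simp
next
  case (Suc m)
  then have "X \<in> derived_step n (derived_series n S m)"
    unfolding derived_series_def by simp
  then show ?case
    using derived_step_supported_above_diag Suc.IH by blast
qed

lemma supported_above_diag_dim_eq_0:
  assumes "supported_above_diag n n X"
  shows "X = (\<lambda>i j. 0)"
proof (intro ext)
  fix i j
  show "X i j = 0"
    using assms unfolding supported_above_diag_def
    by (cases "i \<in> {1..n} \<and> j \<in> {1..n}") auto
qed

lemma solvable_lie_upper_triangular:
  assumes "\<And>X i j. X \<in> S \<Longrightarrow> (i \<notin> {1..n} \<or> j \<notin> {1..n}) \<Longrightarrow> X i j = 0"
    and "\<And>X. X \<in> S \<Longrightarrow> upper_triangular n X"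
  shows "solvable_lie n S"
proof -
  have "supported_above_diag n 0 X" if "X \<in> S" for X
    using assms that unfolding supported_above_diag_def upper_triangular_def
    by (metis add_0_right atLeastAtMost_iff le_trans less_imp_le_nat not_le)
  then have "derived_series n S n \<subseteq> {\<lambda>i j. 0}"
    using derived_series_supported_above_diag supported_above_diag_dim_eq_0 by blast
  then show ?thesis
    unfolding solvable_lie_def by blast
qed

theorem proposition3p5:
  fixes n d :: nat
  assumes alg_closed: "\<forall>p :: 'a::field_char_0 poly. degree p \<ge> 1 \<longrightarrow> (\<exists>x. poly p x = 0)"
    and "d \<ge> 3" and "n \<ge> 1"
  shows "(\<forall>L \<in> (Lnd n d :: 'a mat set). upper_triangular n L) \<and> solvable_lie n (Lnd n d :: 'a mat set)"
proof
  show "\<forall>L \<in> (Lnd n d :: 'a mat set). upper_triangular n L"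
    using Lnd_upper_triangular \<open>d \<ge> 3\<close> by blast
  then show "solvable_lie n (Lnd n d :: 'a mat set)"
    using Lnd_entries_outside by (blast intro: solvable_lie_upper_triangular)
qed

end
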